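(* Let $I=(G,T,k)$, $G=(V,E)$, be a Node Multiway Cut instance satisfying (R1) no two terminals are adjacent and $p(I)\ge 0$; (R2) no vertex of $V\setminus T$ is adjacent to two distinct terminals; (R3) for every terminal $t$ and every neighbour $w\in V\setminus T$ of $t$, the optimum of the LP-relaxation of $I$ with the additional constraint $d_w=0$ is strictly larger than $LP(I)$. Let $t\in T$ and let $w\in V\setminus T$ be a neighbour of $t$. Let $I_1=(G-w,T,k-1)$ and $I_2=(G/tw,T,k)$. Then $LP(I_1)\ge LP(I)-1/2$ and $LP(I_2)\ge LP(I)+1/2$; consequently $p(I_1)\le p(I)-1/2$ and $p(I_2)\le p(I)-1/2$. Moreover, $I$ is a YES-instance iff $I_1$ or $I_2$ is a YES-instance.
   Context: A Node Multiway Cut instance $I=(G,T,k)$ consists of a simple undirected graph $G=(V,E)$, a set $T\subseteq V$ of terminals and an integer $k$; it is a YES-instance iff there is a set $X\subseteq V\setminus T$ with $|X|\le k$ such that every path in $G$ between two distinct terminals contains a vertex of $X$. Let $\mathcal P(I)$ be the set of all simple paths in $G$ connecting two distinct terminals. The LP-relaxation of $I$ is: minimize $\sum_{v\in V\setminus T} d_v$ subject to $\sum_{v\in V(P)\setminus T} d_v\ge 1$ for every $P\in\mathcal P(I)$ and $d_v\ge 0$ for all $v\in V\setminus T$. $LP(I)$ denotes its optimum value and $p(I)=k-LP(I)$. $G-w$ is $G$ with vertex $w$ and its incident edges removed. For a terminal $t$ and a non-terminal neighbour $w$, $G/tw$ is obtained by deleting $t$ and $w$ and adding a new vertex adjacent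 to all vertices formerly adjacent to $t$ or $w$; this new vertex is identified with $t$, so the terminal set remains $T$. *)

theory Defs
  imports Main "HOL-Library.Extended_Real"
begin

type_synonym 'a graph = "'a set \<times> 'a set set"

definition simple_graph :: "'a graph \<Rightarrow> bool" where
  "simple_graph G \<longleftrightarrow> finite (fst G) \<and> (\<forall>e\<in>snd G. card e = 2 \<and> e \<subseteq> fst G)"

definition adj :: "'a graph \<Rightarrow> 'a \<Rightarrow> 'a \<Rightarrow> bool" where
  "adj G u v \<longleftrightarrow> {u, v} \<in> snd G"

definition simple_path :: "'a graph \<Rightarrow> 'a list \<Rightarrow> bool" where
  "simple_path G P \<longleftrightarrow> P \<noteq> [] \<and> distinct P \<and> set P \<subseteq> fst G \<and>
     (\<forall>i. Suc i < length P \<longrightarrow> adj G (P ! i) (P ! Suc i))"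

definition term_paths :: "'a graph \<Rightarrow> 'a set \<Rightarrow> 'a list set" where
  "term_paths G T = {P. simple_path G P \<and> hd P \<in> T \<and> last P \<in> T \<and> hd P \<noteq> last P}"

definition is_mwc_instance :: "'a graph \<Rightarrow> 'a set \<Rightarrow> bool" where
  "is_mwc_instance G T \<longleftrightarrow> simple_graph G \<and> T \<subseteq> fst G"

definition yes_instance :: "'a graph \<Rightarrow> 'a set \<Rightarrow> int \<Rightarrow> bool" where
  "yes_instance G T k \<longleftrightarrow> (\<exists>X. X \<subseteq> fst G - T \<and> int (card X) \<le> k \<and>
      (\<forall>P\<in>term_paths G T. set P \<inter> X \<noteq> {}))"

text \<open>Feasible solutions of the LP relaxation (only values on V \ T matter).\<close>
definition lp_feasible :: "'a graph \<Rightarrow> 'a set \<Rightarrow> ('a \<Rightarrow> real) \<Rightarrow> bool" where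
  "lp_feasible G T d \<longleftrightarrow> (\<forall>v\<in>fst G - T. d v \<ge> 0) \<and>
      (\<forall>P\<in>term_paths G T. (\<Sum>v\<in>set P - T. d v) \<ge> 1)"

text \<open>Optimum value of the LP relaxation, in the extended reals (+\<infinity> if infeasible).\<close>
definition LP :: "'a graph \<Rightarrow> 'a set \<Rightarrow> ereal" where
  "LP G T = (INF d \<in> {d. lp_feasible G T d}. ereal (\<Sum>v\<in>fst G - T. d v))"

definition LP_zero :: "'a graph \<Rightarrow> 'a set \<Rightarrow> 'a \<Rightarrow> ereal" where
  "LP_zero G T w = (INF d \<in> {d. lp_feasible G T d \<and> d w = 0}. ereal (\<Sum>v\<in>fst G - T. d v))"

definition gap :: "'a graph \<Rightarrow> 'a set \<Rightarrow> int \<Rightarrow> ereal" where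
  "gap G T k = ereal (of_int k) - LP G T"

definition del_vertex :: "'a graph \<Rightarrow> 'a \<Rightarrow> 'a graph" where
  "del_vertex G w = (fst G - {w}, {e \<in> snd G. w \<notin> e})"

text \<open>G/tw: delete t and w, add a new vertex (identified with t) adjacent to all
  vertices formerly adjacent to t or w.\<close>
definition contract :: "'a graph \<Rightarrow> 'a \<Rightarrow> 'a \<Rightarrow> 'a graph" where
  "contract G t w = (fst G - {w},
     {e \<in> snd G. t \<notin> e \<and> w \<notin> e} \<union>
     {{t, x} | x. x \<in> fst G \<and> x \<noteq> t \<and> x \<noteq> w \<and> (adj G t x \<or> adj G w x)})"

end

theory Submission
  imports Defs "HOL-Analysis.Analysis"
begin

text \<open>The heart of the proof is half-integrality of the LP relaxation (theorem LP_half_integral):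
  when no two terminals are adjacent, the LP optimum is attained by a solution with values in
  {0, 1/2, 1}. This is shown by threshold rounding: for a feasible d and a threshold
  \<theta> \<in> [0, 1/2), give 1/2 to every vertex lying on the boundary of the \<theta>-ball (in the
  d-weighted distance) around some terminal, and another 1/2 if it lies on two such
  boundaries. Every such rounding is feasible, and averaging over \<theta> (a Lebesgue integral)
  shows that some threshold costs no more than d.

  With half-integrality, (R3) forces
  LP(G/tw) > LP(I), hence LP(G/tw) \<ge> LP(I) + 1/2; and if deleting w lowered the LP by a full
  unit, the lifted solution would vanish at a terminal neighbour (counting against the
  all-1/2 solution on terminal neighbours given by (R1), (R2)), contradicting (R3).\<close>

text \<open>Repetitions (and stutters) are allowed, which makes walks closed under concatenation,
  reversal and the vertex identification performed by a contraction.\<close>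

fun walk :: "'a graph \<Rightarrow> 'a list \<Rightarrow> bool" where
  "walk G [] = False"
| "walk G [v] = (v \<in> fst G)"
| "walk G (u # v # W) = (u \<in> fst G \<and> (u = v \<or> adj G u v) \<and> walk G (v # W))"

lemma adj_sym: "adj G u v = adj G v u"
  unfolding adj_def by (simp add: insert_commute)

lemma walk_nonempty: "walk G W \<Longrightarrow> W \<noteq> []"
  by (cases W) auto

lemma walk_set: "walk G W \<Longrightarrow> set W \<subseteq> fst G"
  by (induction G W rule: walk.induct) auto

lemma walk_Cons:
  "walk G (u # W) \<longleftrightarrow> u \<in> fst G \<and> (W = [] \<or> ((u = hd W \<or> adj G u (hd W)) \<and> walk G W))"
  by (cases W) auto

lemma walk_append:
  assumes "walk G A" "walk G B" "last A = hd B \<or> adj G (last A) (hd B)"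
  shows "walk G (A @ B)"
  using assms
proof (induction A)
  case (Cons a A)
  show ?case
  proof (cases "A = []")
    case True
    then show ?thesis using Cons.prems walk_nonempty[OF Cons.prems(2)] by (simp add: walk_Cons)
  next
    case False
    then have "walk G A" using Cons.prems(1) by (simp add: walk_Cons)
    then have "walk G (A @ B)" using Cons.IH Cons.prems False by simp
    then show ?thesis using Cons.prems(1) False by (simp add: walk_Cons)
  qed
qed simp

lemma walk_rev: "walk G W \<Longrightarrow> walk G (rev W)"
proof (induction W)
  case (Cons a W)
  show ?case
  proof (cases "W = []")
    case False
    then have "walk G W" "a \<in> fst G" "a = hd W \<or> adj G a (hd W)"
      using Cons.prems by (auto simp: walk_Cons)
    then have "walk G (rev W @ [a])"
      using Cons.IH False by (intro walk_append) (auto simp: last_rev adj_sym)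
    then show ?thesis by simp
  qed (use Cons.prems in simp)
qed simp

lemma walk_drop: "walk G W \<Longrightarrow> i < length W \<Longrightarrow> walk G (drop i W)"
proof (induction W arbitrary: i)
  case (Cons a W)
  then show ?case by (cases i) (auto simp: walk_Cons)
qed simp

lemma walk_take: "walk G W \<Longrightarrow> 0 < i \<Longrightarrow> walk G (take i W)"
proof (induction W arbitrary: i)
  case (Cons a W)
  obtain j where j: "i = Suc j" using Cons.prems by (cases i) auto
  show ?case
  proof (cases "W = [] \<or> j = 0")
    case False
    then have "walk G W" "a \<in> fst G" "a = hd W \<or> adj G a (hd W)"
      using Cons.prems by (auto simp: walk_Cons)
    moreover have "hd (take j W) = hd W" using False by (simp add: hd_take)
    ultimately show ?thesis using Cons.IH False j by (simp add: walk_Cons)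
  qed (use Cons.prems j in \<open>auto simp: walk_Cons\<close>)
qed simp

lemma walk_nth_iff:
  "walk G W \<longleftrightarrow> W \<noteq> [] \<and> set W \<subseteq> fst G \<and>
     (\<forall>i. Suc i < length W \<longrightarrow> W ! i = W ! Suc i \<or> adj G (W ! i) (W ! Suc i))"
proof (induction W)
  case (Cons a W)
  show ?case
  proof (cases W)
    case (Cons b W')
    have "(\<forall>i. Suc i < length (a # W) \<longrightarrow> (a # W) ! i = (a # W) ! Suc i \<or> adj G ((a # W) ! i) ((a # W) ! Suc i))
      \<longleftrightarrow> (a = b \<or> adj G a b) \<and> (\<forall>i. Suc i < length W \<longrightarrow> W ! i = W ! Suc i \<or> adj G (W ! i) (W ! Suc i))"
      (is "?L \<longleftrightarrow> ?R")
    proof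
      assume L: ?L
      have "a = b \<or> adj G a b" using L[rule_format, of 0] Cons by simp
      moreover have "\<forall>i. Suc i < length W \<longrightarrow> W ! i = W ! Suc i \<or> adj G (W ! i) (W ! Suc i)"
        using L[rule_format, of "Suc _"] by simp
      ultimately show ?R by blast
    next
      assume R: ?R
      show ?L
      proof (intro allI impI)
        fix i assume i: "Suc i < length (a # W)"
        show "(a # W) ! i = (a # W) ! Suc i \<or> adj G ((a # W) ! i) ((a # W) ! Suc i)"
        proof (cases i)
          case 0 then show ?thesis using R Cons by simp
        next
          case (Suc j) then show ?thesis using R i by simp
        qed
      qed
    qed
    then show ?thesis using Cons.IH Cons by auto
  qed simp
qed simp

lemma simple_path_iff: "Defs.simple_path G P \<longleftrightarrow> walk G P \<and> distinct P"
  unfolding Defs.simple_path_def walk_nth_iff by (auto simp: nth_eq_iff_index_eq)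

lemma walk_to_path:
  assumes "walk G W"
  shows "\<exists>P. Defs.simple_path G P \<and> hd P = hd W \<and> last P = last W \<and> set P \<subseteq> set W"
  using assms
proof (induction W)
  case (Cons a W)
  show ?case
  proof (cases "W = []")
    case True
    then show ?thesis using Cons.prems by (intro exI[of _ "[a]"]) (simp add: simple_path_iff)
  next
    case False
    then have wW: "walk G W" and a: "a \<in> fst G" "a = hd W \<or> adj G a (hd W)"
      using Cons.prems by (auto simp: walk_Cons)
    obtain P where P: "Defs.simple_path G P" "hd P = hd W" "last P = last W" "set P \<subseteq> set W"
      using Cons.IH[OF wW] by blast
    have Pne: "P \<noteq> []" using P(1) by (simp add: Defs.simple_path_def)
    show ?thesis
    proof (cases "a \<in> set P")
      case True
      \<comment> \<open>shortcut: restart the path at the earlier occurrence of a\<close>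
      then obtain i where i: "i < length P" "P ! i = a" by (meson in_set_conv_nth)
      then have "Defs.simple_path G (drop i P)" "hd (drop i P) = a"
        using P(1) by (simp_all add: simple_path_iff walk_drop hd_drop_conv_nth)
      then show ?thesis using P False i set_drop_subset[of i P] by (intro exI[of _ "drop i P"]) auto
    next
      case False
      then have "adj G a (hd P)" using a P(2) Pne by (metis hd_in_set)
      then have "Defs.simple_path G (a # P)" using P(1) a(1) False Pne by (simp add: walk_Cons simple_path_iff)
      then show ?thesis using P Pne \<open>W \<noteq> []\<close> by (intro exI[of _ "a # P"]) auto
    qed
  qed
qed simp

lemma term_paths_walk:
  "P \<in> term_paths G T \<longleftrightarrow> walk G P \<and> distinct P \<and> hd P \<in> T \<and> last P \<in> T \<and> hd P \<noteq> last P"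
  unfolding term_paths_def simple_path_iff by auto

lemma walk_contains_term_path:
  assumes "walk G W" "hd W \<in> T" "last W \<in> T" "hd W \<noteq> last W"
  shows "\<exists>P\<in>term_paths G T. set P \<subseteq> set W"
proof -
  obtain P where "Defs.simple_path G P" "hd P = hd W" "last P = last W" "set P \<subseteq> set W"
    using walk_to_path[OF assms(1)] by blast
  then show ?thesis using assms unfolding term_paths_def by auto
qed

lemma term_path_adj:
  "P \<in> term_paths G T \<Longrightarrow> Suc i < length P \<Longrightarrow> adj G (P ! i) (P ! Suc i)"
  by (simp add: term_paths_def Defs.simple_path_def)

lemma term_path_set: "P \<in> term_paths G T \<Longrightarrow> set P \<subseteq> fst G"
  by (simp add: term_paths_def Defs.simple_path_def)

lemma term_path_ends:
  assumes no_adj: "\<forall>u\<in>T. \<forall>v\<in>T. \<not> adj G u v" and P: "P \<in> term_paths G T"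
  shows "3 \<le> length P" "adj G (hd P) (P ! 1)" "adj G (P ! (length P - 2)) (last P)"
    "P ! 1 \<notin> T" "P ! (length P - 2) \<notin> T"
proof -
  have ends: "hd P \<in> T" "last P \<in> T" "hd P \<noteq> last P" and ne: "P \<noteq> []"
    using P by (auto simp: term_paths_def Defs.simple_path_def)
  have hd: "hd P = P ! 0" and lst: "last P = P ! (length P - 1)"
    using ne by (simp_all add: hd_conv_nth last_conv_nth)
  have "length P \<noteq> 1" using ends ne by (cases P) auto
  moreover have "length P \<noteq> 2"
  proof
    assume "length P = 2"
    then have "adj G (hd P) (last P)" using term_path_adj[OF P, of 0] hd lst by simp
    then show False using no_adj ends by blast
  qed
  ultimately show len: "3 \<le> length P" using ne by (cases "length P") auto
  show a1: "adj G (hd P) (P ! 1)" using term_path_adj[OF P, of 0] len hd by simp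
  have "Suc (length P - 2) = length P - 1" using len by simp
  then show a2: "adj G (P ! (length P - 2)) (last P)"
    using term_path_adj[OF P, of "length P - 2"] len lst by simp
  show "P ! 1 \<notin> T" "P ! (length P - 2) \<notin> T" using a1 a2 ends no_adj by (auto simp: adj_sym)
qed

lemma adj_del: "adj (del_vertex G w) u v \<longleftrightarrow> adj G u v \<and> u \<noteq> w \<and> v \<noteq> w"
  unfolding adj_def del_vertex_def by auto

lemma fst_del: "fst (del_vertex G w) = fst G - {w}"
  by (simp add: del_vertex_def)

lemma walk_del: "walk (del_vertex G w) W \<longleftrightarrow> walk G W \<and> w \<notin> set W"
proof (induction W)
  case (Cons a W)
  show ?case
  proof (cases "W = []")
    case False
    then have "hd W \<in> set W" by simp
    then show ?thesis using Cons.IH False by (auto simp: walk_Cons adj_del fst_del)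
  qed (auto simp: del_vertex_def)
qed simp

lemma term_paths_del: "P \<in> term_paths (del_vertex G w) T \<longleftrightarrow> P \<in> term_paths G T \<and> w \<notin> set P"
  unfolding term_paths_walk walk_del by auto

lemma adj_contract:
  "adj (contract G t w) u v \<longleftrightarrow> (adj G u v \<and> t \<noteq> u \<and> t \<noteq> v \<and> w \<noteq> u \<and> w \<noteq> v) \<or>
     (\<exists>x. {u, v} = {t, x} \<and> x \<in> fst G \<and> x \<noteq> t \<and> x \<noteq> w \<and> (adj G t x \<or> adj G w x))"
  unfolding adj_def contract_def by auto

lemma contract_step:
  assumes "u \<in> fst G" "v \<in> fst G" "adj G u v" "t \<noteq> w"
  defines "f \<equiv> (\<lambda>x. if x = w then t else x)"
  shows "f u = f v \<or> adj (contract G t w) (f u) (f v)"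
proof -
  consider "u = w \<or> u = t" "v = w \<or> v = t" | "u = w \<or> u = t" "v \<noteq> w" "v \<noteq> t"
    | "u \<noteq> w" "u \<noteq> t" "v = w \<or> v = t" | "u \<noteq> w" "u \<noteq> t" "v \<noteq> w" "v \<noteq> t"
    by blast
  then show ?thesis
  proof cases
    case 1 then show ?thesis unfolding f_def using assms(4) by auto
  next
    case 2 then show ?thesis unfolding f_def adj_contract using assms by auto
  next
    case 3 then show ?thesis unfolding f_def adj_contract using assms
      by (auto simp: adj_sym[of G u] insert_commute intro!: exI[of _ u])
  next
    case 4 then show ?thesis unfolding f_def adj_contract using assms by auto
  qed
qed

lemma walk_to_contract:
  assumes "walk G P" "t \<in> fst G" "t \<noteq> w"
  shows "walk (contract G t w) (map (\<lambda>x. if x = w then t else x) P)"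
  using assms(1)
proof (induction P)
  case (Cons a P)
  let ?f = "\<lambda>x. if x = w then t else x"
  have fa: "?f a \<in> fst (contract G t w)"
    using Cons.prems assms(2,3) by (auto simp: contract_def walk_Cons)
  show ?case
  proof (cases "P = []")
    case False
    then have wP: "walk G P" and a: "a \<in> fst G" "a = hd P \<or> adj G a (hd P)"
      using Cons.prems by (auto simp: walk_Cons)
    have hP: "hd P \<in> fst G" using walk_set[OF wP] False by auto
    have "?f a = ?f (hd P) \<or> adj (contract G t w) (?f a) (?f (hd P))"
      using a contract_step[OF a(1) hP _ assms(3)] by auto
    then show ?thesis using Cons.IH[OF wP] fa False by (simp add: walk_Cons hd_map)
  qed (use fa in simp)
qed simp

text \<open>Conversely, a walk in G/tw expands to a walk in G by inserting
  w where an edge of the merged vertex came from w.\<close>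
lemma walk_from_contract:
  assumes "walk (contract G t w) Q" "adj G t w" "w \<in> fst G"
  shows "\<exists>W. walk G W \<and> hd W = hd Q \<and> last W = last Q \<and> set W \<subseteq> set Q \<union> {w}"
  using assms(1)
proof (induction Q)
  case (Cons a Q)
  have a: "a \<in> fst G" using Cons.prems by (auto simp: walk_Cons contract_def)
  show ?case
  proof (cases "Q = []")
    case True then show ?thesis using a by (intro exI[of _ "[a]"]) auto
  next
    case False
    then have wQ: "walk (contract G t w) Q" and h: "a = hd Q \<or> adj (contract G t w) a (hd Q)"
      using Cons.prems by (auto simp: walk_Cons)
    obtain W where W: "walk G W" "hd W = hd Q" "last W = last Q" "set W \<subseteq> set Q \<union> {w}"
      using Cons.IH[OF wQ] by blast
    have Wne: "W \<noteq> []" using W(1) walk_nonempty by auto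
    show ?thesis
    proof (cases "a = hd Q \<or> adj G a (hd Q)")
      case True
      then have "walk G (a # W)" using W a Wne by (auto simp: walk_Cons)
      then show ?thesis using W False Wne by (intro exI[of _ "a # W"]) auto
    next
      case nadj: False
      then obtain x where x: "{a, hd Q} = {t, x}" "adj G w x"
        using h assms(2) unfolding adj_contract by (auto simp: doubleton_eq_iff adj_sym)
      then have "adj G a w" "adj G w (hd W)"
        using nadj assms(2) W(2) by (auto simp: doubleton_eq_iff adj_sym)
      then have "walk G (a # w # W)" using W(1) Wne a assms(3) by (simp add: walk_Cons)
      then show ?thesis using W False Wne by (intro exI[of _ "a # w # W"]) auto
    qed
  qed
qed simp

lemma term_path_to_contract:
  assumes "P \<in> term_paths G T" "t \<in> T" "t \<in> fst G" "w \<notin> T"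
  shows "\<exists>Q\<in>term_paths (contract G t w) T. set Q \<subseteq> set P - {w} \<union> {t}"
proof -
  let ?f = "\<lambda>x. if x = w then t else x"
  have P: "walk G P" "hd P \<in> T" "last P \<in> T" "hd P \<noteq> last P" and Pne: "P \<noteq> []"
    using assms(1) walk_nonempty by (auto simp: term_paths_walk)
  have "t \<noteq> w" using assms(2,4) by auto
  then have W: "walk (contract G t w) (map ?f P)" using walk_to_contract[OF P(1) assms(3)] by blast
  have "hd (map ?f P) = hd P" "last (map ?f P) = last P"
    using Pne P assms(4) by (auto simp: hd_map last_map)
  then obtain Q where "Q \<in> term_paths (contract G t w) T" "set Q \<subseteq> set (map ?f P)"
    using walk_contains_term_path[OF W, of T] P by auto
  moreover have "set (map ?f P) \<subseteq> set P - {w} \<union> {t}" by auto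
  ultimately show ?thesis by blast
qed

lemma term_path_from_contract:
  assumes "Q \<in> term_paths (contract G t w) T" "adj G t w" "w \<in> fst G"
  shows "\<exists>P\<in>term_paths G T. set P \<subseteq> set Q \<union> {w}"
proof -
  have Q: "walk (contract G t w) Q" "hd Q \<in> T" "last Q \<in> T" "hd Q \<noteq> last Q"
    using assms(1) by (auto simp: term_paths_walk)
  obtain W where W: "walk G W" "hd W = hd Q" "last W = last Q" "set W \<subseteq> set Q \<union> {w}"
    using walk_from_contract[OF Q(1) assms(2,3)] by blast
  obtain P where "P \<in> term_paths G T" "set P \<subseteq> set W"
    using walk_contains_term_path[OF W(1), of T] W Q by auto
  then show ?thesis using W(4) by blast
qed

definition multiway_cut :: "'a graph \<Rightarrow> 'a set \<Rightarrow> 'a set \<Rightarrow> bool" where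
  "multiway_cut G T X \<longleftrightarrow> X \<subseteq> fst G - T \<and> (\<forall>P\<in>term_paths G T. set P \<inter> X \<noteq> {})"

lemma yes_instance_cut: "yes_instance G T k \<longleftrightarrow> (\<exists>X. multiway_cut G T X \<and> int (card X) \<le> k)"
  unfolding yes_instance_def multiway_cut_def by blast

lemma cut_del:
  assumes "multiway_cut G T X" "w \<in> X"
  shows "multiway_cut (del_vertex G w) T (X - {w})"
  using assms unfolding multiway_cut_def by (auto simp: fst_del term_paths_del; blast)

lemma cut_undel:
  assumes "multiway_cut (del_vertex G w) T X" "w \<in> fst G - T"
  shows "multiway_cut G T (insert w X)"
  using assms unfolding multiway_cut_def by (auto simp: fst_del term_paths_del)

lemma cut_contract:
  assumes "multiway_cut G T X" "w \<notin> X" "adj G t w" "w \<in> fst G"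
  shows "multiway_cut (contract G t w) T X"
  unfolding multiway_cut_def
proof (intro conjI ballI)
  show "X \<subseteq> fst (contract G t w) - T" using assms(1,2) by (auto simp: multiway_cut_def contract_def)
  fix Q assume "Q \<in> term_paths (contract G t w) T"
  then obtain P where "P \<in> term_paths G T" "set P \<subseteq> set Q \<union> {w}"
    using term_path_from_contract[OF _ assms(3,4)] by blast
  then show "set Q \<inter> X \<noteq> {}" using assms(1,2) unfolding multiway_cut_def by blast
qed

lemma cut_uncontract:
  assumes "multiway_cut (contract G t w) T X" "t \<in> T" "t \<in> fst G" "w \<notin> T"
  shows "multiway_cut G T X"
  unfolding multiway_cut_def
proof (intro conjI ballI)
  show "X \<subseteq> fst G - T" using assms(1) by (auto simp: multiway_cut_def contract_def)
  fix P assume "P \<in> term_paths G T"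
  then obtain Q where "Q \<in> term_paths (contract G t w) T" "set Q \<subseteq> set P - {w} \<union> {t}"
    using term_path_to_contract[OF _ assms(2-4)] by blast
  then show "set P \<inter> X \<noteq> {}" using assms(1,2) unfolding multiway_cut_def by blast
qed

text \<open>Branching on whether w belongs to a solution X: if w \<in> X then X - {w} solves
  (G - w, T, k - 1), otherwise X solves (G/tw, T, k).\<close>
lemma yes_instance_to_branches:
  assumes fin: "finite (fst G)" and w: "w \<in> fst G - T" and tw: "adj G t w"
    and yes: "yes_instance G T k"
  shows "yes_instance (del_vertex G w) T (k - 1) \<or> yes_instance (contract G t w) T k"
proof -
  obtain X where X: "multiway_cut G T X" "int (card X) \<le> k" using yes unfolding yes_instance_cut by blast
  show ?thesis
  proof (cases "w \<in> X")
    case True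
    have "finite X" using X(1) finite_subset[OF _ fin] by (auto simp: multiway_cut_def)
    then have "card X = Suc (card (X - {w}))" using True by (rule card.remove)
    then have "int (card (X - {w})) \<le> k - 1" using X(2) by linarith
    then have "yes_instance (del_vertex G w) T (k - 1)"
      unfolding yes_instance_cut using cut_del[OF X(1) True] by (intro exI[of _ "X - {w}"]) simp
    then show ?thesis ..
  next
    case False
    have "yes_instance (contract G t w) T k"
      unfolding yes_instance_cut using cut_contract[OF X(1) False tw] w X(2) by (intro exI[of _ X]) simp
    then show ?thesis ..
  qed
qed

lemma yes_instance_from_branches:
  assumes fin: "finite (fst G)" and t: "t \<in> T" "t \<in> fst G" and w: "w \<in> fst G - T"
    and yes: "yes_instance (del_vertex G w) T (k - 1) \<or> yes_instance (contract G t w) T k"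
  shows "yes_instance G T k"
  using yes
proof
  assume "yes_instance (del_vertex G w) T (k - 1)"
  then obtain X where X: "multiway_cut (del_vertex G w) T X" "int (card X) \<le> k - 1"
    unfolding yes_instance_cut by blast
  have "finite X" using X(1) finite_subset[OF _ fin] by (auto simp: multiway_cut_def fst_del)
  then have "card (insert w X) \<le> Suc (card X)" by (simp add: card_insert_if)
  then have "int (card (insert w X)) \<le> k" using X(2) by linarith
  then show ?thesis unfolding yes_instance_cut using cut_undel[OF X(1) w] by (intro exI[of _ "insert w X"]) simp
next
  assume "yes_instance (contract G t w) T k"
  then obtain X where X: "multiway_cut (contract G t w) T X" "int (card X) \<le> k"
    unfolding yes_instance_cut by blast
  then show ?thesis
    unfolding yes_instance_cut using cut_uncontract[OF X(1) t] w by (intro exI[of _ X]) simp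
qed

lemma yes_instance_branching:
  assumes fin: "finite (fst G)" and t: "t \<in> T" "t \<in> fst G" and w: "w \<in> fst G - T" and tw: "adj G t w"
  shows "yes_instance G T k \<longleftrightarrow>
    yes_instance (del_vertex G w) T (k - 1) \<or> yes_instance (contract G t w) T k"
  using yes_instance_to_branches[OF fin w tw] yes_instance_from_branches[OF fin t w] by blast

text \<open>Under (R1) and (R2) the contraction creates no edge between terminals: the merged
  vertex t only inherits neighbours of w, whose only terminal neighbour is t.\<close>
lemma contract_no_adjacent_terminals:
  assumes no_adj: "\<forall>u\<in>T. \<forall>v\<in>T. \<not> adj G u v"
    and unique: "\<forall>v\<in>fst G - T. \<forall>u\<in>T. \<forall>u'\<in>T. adj G v u \<and> adj G v u' \<longrightarrow> u = u'"
    and t: "t \<in> T" and w: "w \<in> fst G - T" and tw: "adj G t w"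
  shows "\<forall>u\<in>T. \<forall>v\<in>T. \<not> adj (contract G t w) u v"
proof (intro ballI notI)
  fix u v assume uv: "u \<in> T" "v \<in> T" "adj (contract G t w) u v"
  then consider "adj G u v" | x where "{u, v} = {t, x}" "x \<noteq> t" "adj G t x \<or> adj G w x"
    unfolding adj_contract by blast
  then show False
  proof cases
    case 2
    then have "x \<in> T" using uv by (auto simp: doubleton_eq_iff)
    have "\<not> adj G t x" using no_adj t \<open>x \<in> T\<close> by blast
    moreover have "\<not> adj G w x"
    proof
      assume "adj G w x"
      moreover have "adj G w t" using tw by (simp add: adj_sym)
      ultimately have "x = t" using unique w t \<open>x \<in> T\<close> by blast
      then show False using 2(2) by simp
    qed
    ultimately show False using 2(3) by blast
  qed (use no_adj uv in blast)
qed

definition covered_once :: "('b \<Rightarrow> real) \<Rightarrow> real \<Rightarrow> 'b set \<Rightarrow> real set" where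
  "covered_once a \<delta> T = {\<theta>. \<exists>t\<in>T. a t \<le> \<theta> \<and> \<theta> < a t + \<delta>}"

definition covered_twice :: "('b \<Rightarrow> real) \<Rightarrow> real \<Rightarrow> 'b set \<Rightarrow> real set" where
  "covered_twice a \<delta> T =
     {\<theta>. \<exists>s\<in>T. \<exists>t\<in>T. s \<noteq> t \<and> a s \<le> \<theta> \<and> \<theta> < a s + \<delta> \<and> a t \<le> \<theta> \<and> \<theta> < a t + \<delta>}"

lemma covered_once_sets:
  assumes "finite T" shows "covered_once a \<delta> T \<in> sets lborel"
proof -
  have "covered_once a \<delta> T = (\<Union>t\<in>T. {a t..<a t + \<delta>})"
    by (auto simp: covered_once_def)
  then show ?thesis using assms by auto
qed

lemma covered_twice_sets:
  assumes "finite T" shows "covered_twice a \<delta> T \<in> sets lborel"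
proof -
  have "covered_twice a \<delta> T = (\<Union>s\<in>T. \<Union>t\<in>T - {s}. {a s..<a s + \<delta>} \<inter> {a t..<a t + \<delta>})"
    by (simp add: set_eq_iff covered_twice_def) blast
  then show ?thesis using assms by (auto intro!: sets.finite_UN)
qed

lemma measure_le_interval:
  fixes A :: "real set"
  assumes "A \<in> sets lborel" "A \<subseteq> {l..u}" "l \<le> u"
  shows "measure lborel A \<le> u - l"
proof -
  have "measure lborel A \<le> measure lborel {l..u}"
    by (rule measure_mono_fmeasurable) (use assms in \<open>auto simp: fmeasurable_def\<close>)
  then show ?thesis using assms by simp
qed

text \<open>If at most one interval starts below 1/2, nothing in [0, 1/2) is covered
  twice and the once-covered part lies in a single interval.\<close>
lemma covered_measure_one_low:
  assumes fin: "finite T" and \<delta>: "0 \<le> \<delta>"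
    and one_low: "\<forall>s\<in>T. \<forall>t\<in>T. s \<noteq> t \<longrightarrow> 1/2 \<le> a s \<or> 1/2 \<le> a t"
  shows "measure lborel (covered_once a \<delta> T \<inter> {0..<1/2})
       + measure lborel (covered_twice a \<delta> T \<inter> {0..<1/2}) \<le> \<delta>"
proof -
  have ms: "covered_once a \<delta> T \<inter> {0..<1/2} \<in> sets lborel" using covered_once_sets[OF fin] by auto
  have twice: "covered_twice a \<delta> T \<inter> {0..<1/2} = {}"
    using one_low by (force simp: covered_twice_def)
  have "measure lborel (covered_once a \<delta> T \<inter> {0..<1/2}) \<le> \<delta>"
  proof (cases "\<exists>t0\<in>T. a t0 < 1/2")
    case True
    then obtain t0 where t0: "t0 \<in> T" "a t0 < 1/2" by blast
    have "covered_once a \<delta> T \<inter> {0..<1/2} \<subseteq> {a t0..a t0 + \<delta>}"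
      using one_low t0 by (force simp: covered_once_def)
    then show ?thesis using measure_le_interval[OF ms] \<delta> by fastforce
  next
    case False
    then have "covered_once a \<delta> T \<inter> {0..<1/2} = {}" by (force simp: covered_once_def)
    then show ?thesis using \<delta> by simp
  qed
  then show ?thesis by (simp add: twice)
qed

text \<open>If two intervals start below 1/2, with s0 and s1 the two
  lowest starting points, the once-covered part of [0, 1/2) lies in
  [a s0, 1/2] and the twice-covered part in [a s1, 1/2].\<close>
lemma covered_measure_two_low:
  assumes fin: "finite T" and s: "s0 \<in> T" "s1 \<in> T" "s0 \<noteq> s1" "a s1 < 1/2"
    and s0_min: "\<forall>u\<in>T. a s0 \<le> a u" and s1_min: "\<forall>u\<in>T - {s0}. a s1 \<le> a u"
    and pair: "a s0 + a s1 + \<delta> \<ge> 1"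
  shows "measure lborel (covered_once a \<delta> T \<inter> {0..<1/2})
       + measure lborel (covered_twice a \<delta> T \<inter> {0..<1/2}) \<le> \<delta>"
proof -
  have ms1: "covered_once a \<delta> T \<inter> {0..<1/2} \<in> sets lborel" using covered_once_sets[OF fin] by auto
  have ms2: "covered_twice a \<delta> T \<inter> {0..<1/2} \<in> sets lborel" using covered_twice_sets[OF fin] by auto
  have "covered_once a \<delta> T \<inter> {0..<1/2} \<subseteq> {a s0..1/2}"
    using s0_min by (force simp: covered_once_def)
  then have m1: "measure lborel (covered_once a \<delta> T \<inter> {0..<1/2}) \<le> 1/2 - a s0"
    using measure_le_interval[OF ms1] s s0_min by force
  have "covered_twice a \<delta> T \<inter> {0..<1/2} \<subseteq> {a s1..1/2}"
  proof
    fix \<theta> assume "\<theta> \<in> covered_twice a \<delta> T \<inter> {0..<1/2}"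
    then obtain p q where pq: "p \<in> T" "q \<in> T" "p \<noteq> q" "a p \<le> \<theta>" "a q \<le> \<theta>" "\<theta> < 1/2"
      by (auto simp: covered_twice_def)
    \<comment> \<open>one of p, q differs from s0, so its start is at least a s1\<close>
    then have "a s1 \<le> \<theta>" using s1_min by (cases "p = s0") force+
    then show "\<theta> \<in> {a s1..1/2}" using pq by simp
  qed
  then have m2: "measure lborel (covered_twice a \<delta> T \<inter> {0..<1/2}) \<le> 1/2 - a s1"
    using measure_le_interval[OF ms2] s by force
  show ?thesis using m1 m2 pair by linarith
qed

lemma covered_measure_bound:
  fixes a :: "'b \<Rightarrow> real"
  assumes fin: "finite T" and \<delta>: "0 \<le> \<delta>"
    and pair: "\<forall>s\<in>T. \<forall>t\<in>T. s \<noteq> t \<longrightarrow> a s + a t + \<delta> \<ge> 1"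
  shows "measure lborel (covered_once a \<delta> T \<inter> {0..<1/2})
       + measure lborel (covered_twice a \<delta> T \<inter> {0..<1/2}) \<le> \<delta>"
proof (cases "\<forall>s\<in>T. \<forall>t\<in>T. s \<noteq> t \<longrightarrow> 1/2 \<le> a s \<or> 1/2 \<le> a t")
  case True
  then show ?thesis using covered_measure_one_low[OF fin \<delta>] by blast
next
  case False
  then obtain s t where st: "s \<in> T" "t \<in> T" "s \<noteq> t" "a s < 1/2" "a t < 1/2" by force
  have "T \<noteq> {}" using st by auto
  define s0 where "s0 = arg_min_on a T"
  have s0: "s0 \<in> T" "\<forall>u\<in>T. a s0 \<le> a u"
    using arg_min_if_finite[OF fin \<open>T \<noteq> {}\<close>, of a] by (auto simp: s0_def not_less)
  have "T - {s0} \<noteq> {}" using st by auto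
  define s1 where "s1 = arg_min_on a (T - {s0})"
  have s1: "s1 \<in> T - {s0}" "\<forall>u\<in>T - {s0}. a s1 \<le> a u"
    using arg_min_if_finite[OF _ \<open>T - {s0} \<noteq> {}\<close>, of a] fin by (auto simp: s1_def not_less)
  have "a s1 < 1/2" using s1 st by (cases "s = s0") force+
  then show ?thesis
    using covered_measure_two_low[OF fin s0(1) _ _ _ s0(2) s1(2)] s1 pair s0(1) by auto
qed

lemma exists_le_average:
  fixes f :: "real \<Rightarrow> real"
  assumes J: "J \<in> fmeasurable lborel" "0 < measure lborel J" and fin: "finite (f ` J)"
    and int: "integrable lborel (\<lambda>\<theta>. indicator J \<theta> * f \<theta>)"
    and avg: "integral\<^sup>L lborel (\<lambda>\<theta>. indicator J \<theta> * f \<theta>) \<le> c * measure lborel J"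
  shows "\<exists>\<theta>\<in>J. f \<theta> \<le> c"
proof -
  have "J \<noteq> {}" using J(2) by auto
  then have "Min (f ` J) \<in> f ` J" using fin by simp
  then obtain \<theta>0 where "\<theta>0 \<in> J" "f \<theta>0 = Min (f ` J)" by auto
  then have \<theta>0: "\<theta>0 \<in> J" "\<forall>\<theta>\<in>J. f \<theta>0 \<le> f \<theta>" using fin by auto
  have iJ: "integrable lborel (indicator J :: real \<Rightarrow> real)"
    using J(1) by (intro integrable_real_indicator) (auto simp: fmeasurable_def)
  have "f \<theta>0 * measure lborel J = integral\<^sup>L lborel (\<lambda>\<theta>. indicator J \<theta> * f \<theta>0)"
    using J(1) by simp
  also have "\<dots> \<le> integral\<^sup>L lborel (\<lambda>\<theta>. indicator J \<theta> * f \<theta>)"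
  proof (rule integral_mono)
    show "integrable lborel (\<lambda>\<theta>. indicator J \<theta> * f \<theta>0)" using iJ by simp
    show "integrable lborel (\<lambda>\<theta>. indicator J \<theta> * f \<theta>)" by (rule int)
    fix \<theta> show "indicator J \<theta> * f \<theta>0 \<le> indicator J \<theta> * f \<theta>"
      using \<theta>0(2) by (cases "\<theta> \<in> J") simp_all
  qed
  finally have "f \<theta>0 * measure lborel J \<le> c * measure lborel J" using avg by linarith
  then show ?thesis using \<theta>0(1) J(2) by (intro bexI[of _ \<theta>0]) simp_all
qed

lemma sum_half_integral:
  fixes f :: "'b \<Rightarrow> real"
  assumes "finite S" "\<And>v. v \<in> S \<Longrightarrow> f v \<in> {0, 1/2, 1}"
  shows "\<exists>k::nat. k \<le> 2 * card S \<and> sum f S = real k / 2"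
  using assms
proof (induction S rule: finite_induct)
  case (insert x S)
  obtain k where k: "k \<le> 2 * card S" "sum f S = real k / 2" using insert by auto
  obtain j :: nat where j: "j \<le> 2" "f x = real j / 2"
    using insert.prems[of x] by (auto intro: exI[of _ 0] exI[of _ 1] exI[of _ 2])
  show ?case using insert k j by (intro exI[of _ "k + j"]) (auto simp: add_divide_distrib)
qed simp

lemma fmeasurable_half: "{0..<1/2::real} \<in> fmeasurable lborel"
proof (rule fmeasurableI2)
  show "{0..1/2::real} \<in> fmeasurable lborel" by (metis cbox_interval fmeasurable_cbox)
qed auto

lemma integrable_indicator_half:
  fixes A :: "real set"
  assumes "A \<in> sets lborel" "A \<subseteq> {0..<1/2}"
  shows "integrable lborel (indicator A :: real \<Rightarrow> real)"
proof -
  have "A \<in> fmeasurable lborel" using fmeasurableI2[OF fmeasurable_half assms(2,1)] .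
  then show ?thesis by (intro integrable_real_indicator) (auto simp: fmeasurable_def)
qed

definition path_cost :: "'a set \<Rightarrow> ('a \<Rightarrow> real) \<Rightarrow> 'a list \<Rightarrow> real" where
  "path_cost T d P = sum d (set P - T)"

definition paths_between :: "'a graph \<Rightarrow> 'a \<Rightarrow> 'a \<Rightarrow> 'a list set" where
  "paths_between G s v = {P. Defs.simple_path G P \<and> hd P = s \<and> last P = v}"

definition interior_nonterminal :: "'a set \<Rightarrow> 'a list \<Rightarrow> bool" where
  "interior_nonterminal T Q \<longleftrightarrow> (\<forall>i. 0 < i \<longrightarrow> i < length Q - 1 \<longrightarrow> Q ! i \<notin> T)"

text \<open>Every terminal path contains one whose interior avoids the terminals: cut it at its
  first terminal after the start.\<close>
lemma term_path_shortcut: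
  assumes P: "P \<in> term_paths G T"
  shows "\<exists>Q\<in>term_paths G T. set Q \<subseteq> set P \<and> interior_nonterminal T Q"
proof -
  have Pw: "walk G P" "distinct P" "hd P \<in> T" "last P \<in> T" "hd P \<noteq> last P" and ne: "P \<noteq> []"
    using P walk_nonempty by (auto simp: term_paths_walk)
  define J where "J = {j. 0 < j \<and> j < length P \<and> P ! j \<in> T}"
  have "length P \<noteq> 1" using Pw(5) ne by (cases P) auto
  then have "length P - 1 \<in> J" using Pw(4) ne by (auto simp: J_def last_conv_nth neq_Nil_conv)
  then have "J \<noteq> {}" by blast
  moreover have "finite J" unfolding J_def by (rule finite_subset[of _ "{..<length P}"]) auto
  ultimately have jJ: "Min J \<in> J" and jmin: "\<And>i. i \<in> J \<Longrightarrow> Min J \<le> i" by simp_all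
  define j where "j = Min J"
  have j: "0 < j" "j < length P" "P ! j \<in> T" using jJ by (auto simp: J_def j_def)
  define Q where "Q = take (Suc j) P"
  have hQ: "hd Q = hd P" using j by (simp add: Q_def)
  have "Q \<noteq> []" "length Q = Suc j" using j by (auto simp: Q_def)
  then have lQ: "last Q = P ! j" by (simp add: last_conv_nth Q_def)
  have "P ! 0 \<noteq> P ! j" using Pw(2) j ne nth_eq_iff_index_eq[of P 0 j] by auto
  then have "hd Q \<noteq> last Q" using hQ lQ ne by (simp add: hd_conv_nth)
  then have "Q \<in> term_paths G T"
    using walk_take[OF Pw(1)] Pw(2,3) j(3) hQ lQ by (simp add: term_paths_walk Q_def)
  moreover have "interior_nonterminal T Q"
    unfolding interior_nonterminal_def
  proof (intro allI impI)
    fix i assume i: "0 < i" "i < length Q - 1"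
    then have "i < j" "i \<notin> J" using jmin j by (force simp: Q_def j_def)+
    then show "Q ! i \<notin> T" using i j by (simp add: J_def Q_def)
  qed
  ultimately show ?thesis using set_take_subset[of "Suc j" P] unfolding Q_def by blast
qed

lemma term_path_rev:
  assumes "Q \<in> term_paths G T" "interior_nonterminal T Q"
  shows "rev Q \<in> term_paths G T" "interior_nonterminal T (rev Q)"
proof -
  show "rev Q \<in> term_paths G T" using assms(1) walk_rev[of G Q]
    by (auto simp: term_paths_walk hd_rev last_rev)
  show "interior_nonterminal T (rev Q)"
    unfolding interior_nonterminal_def
  proof (intro allI impI)
    fix i assume i: "0 < i" "i < length (rev Q) - 1"
    then have "rev Q ! i = Q ! (length Q - Suc i)" by (simp add: rev_nth)
    then show "rev Q ! i \<notin> T" using assms(2) i by (simp add: interior_nonterminal_def)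
  qed
qed

locale lp_rounding =
  fixes G :: "'a graph" and T :: "'a set" and d :: "'a \<Rightarrow> real"
  assumes fin_V: "finite (fst G)" and fin_T: "finite T"
    and no_adj: "\<forall>u\<in>T. \<forall>v\<in>T. \<not> adj G u v"
    and feas: "lp_feasible G T d"
begin

lemma d_nonneg: "v \<in> fst G - T \<Longrightarrow> 0 \<le> d v"
  using feas by (simp add: lp_feasible_def)

lemma path_cost_mono:
  assumes "set A \<subseteq> set B" "set B \<subseteq> fst G"
  shows "path_cost T d A \<le> path_cost T d B"
  unfolding path_cost_def by (rule sum_mono2) (use assms d_nonneg in auto)

lemma finite_paths_between: "finite (paths_between G s v)"
proof (rule finite_subset[OF _ finite_subset_distinct[OF fin_V]])
  show "paths_between G s v \<subseteq> {xs. set xs \<subseteq> fst G \<and> distinct xs}"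
    by (auto simp: paths_between_def Defs.simple_path_def)
qed

text \<open>Distance from s to v: the least cost of an s-v path, counting v itself.
  Unreachable vertices get a value making them irrelevant for thresholds below 1.\<close>
definition wdist :: "'a \<Rightarrow> 'a \<Rightarrow> real" where
  "wdist s v = (if paths_between G s v \<noteq> {}
     then Min (path_cost T d ` paths_between G s v) else d v + 1)"

lemma wdist_le:
  assumes "walk G W" "hd W = s" "last W = v"
  shows "wdist s v \<le> path_cost T d W"
proof -
  obtain P where P: "Defs.simple_path G P" "hd P = s" "last P = v" "set P \<subseteq> set W"
    using walk_to_path[OF assms(1)] assms by auto
  then have Pin: "P \<in> paths_between G s v" by (simp add: paths_between_def)
  then have "wdist s v \<le> path_cost T d P" using finite_paths_between by (auto simp: wdist_def)
  also have "\<dots> \<le> path_cost T d W" using path_cost_mono[OF P(4) walk_set[OF assms(1)]] .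
  finally show ?thesis .
qed

lemma wdist_attained:
  assumes "walk G W" "hd W = s" "last W = v"
  shows "\<exists>P. Defs.simple_path G P \<and> hd P = s \<and> last P = v \<and> path_cost T d P = wdist s v"
proof -
  have ne: "paths_between G s v \<noteq> {}"
    using walk_to_path[OF assms(1)] assms by (auto simp: paths_between_def)
  then have "wdist s v \<in> path_cost T d ` paths_between G s v"
    using finite_paths_between by (simp add: wdist_def)
  then show ?thesis by (auto simp: paths_between_def)
qed

lemma wdist_nonneg:
  assumes "v \<in> fst G - T"
  shows "0 \<le> wdist s v"
proof (cases "paths_between G s v = {}")
  case False
  then obtain P0 where "Defs.simple_path G P0" "hd P0 = s" "last P0 = v"
    by (auto simp: paths_between_def)
  then obtain P where P: "Defs.simple_path G P" "hd P = s" "last P = v" "path_cost T d P = wdist s v"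
    using wdist_attained[of P0 s v] by (auto simp: simple_path_iff)
  then show ?thesis using path_cost_mono[of "[]" P] by (simp add: path_cost_def Defs.simple_path_def)
qed (use d_nonneg[OF assms] in \<open>simp add: wdist_def\<close>)

lemma wdist_step:
  assumes W: "walk G W" "hd W = s" "last W = x" and xy: "adj G x y" and y: "y \<in> fst G - T"
  shows "wdist s y \<le> wdist s x + d y"
proof -
  obtain P where P: "Defs.simple_path G P" "hd P = s" "last P = x" "path_cost T d P = wdist s x"
    using wdist_attained[OF W] by blast
  have wP: "walk G P" and Pne: "P \<noteq> []" using P(1) by (auto simp: simple_path_iff Defs.simple_path_def)
  have "walk G (P @ [y])" using wP y xy P(3) by (intro walk_append) auto
  then have "wdist s y \<le> path_cost T d (P @ [y])" using wdist_le P(2) Pne by simp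
  also have "\<dots> \<le> path_cost T d P + d y"
    unfolding path_cost_def using y d_nonneg[OF y] by (simp add: insert_Diff_if sum.insert_if)
  finally show ?thesis using P(4) by simp
qed

lemma wdist_adjacent:
  assumes "s \<in> T" "s \<in> fst G" "adj G s y" "y \<in> fst G - T"
  shows "wdist s y \<le> d y"
proof -
  have "walk G [s, y]" using assms by simp
  then have "wdist s y \<le> path_cost T d [s, y]" using wdist_le by simp
  also have "\<dots> = d y" using assms by (simp add: path_cost_def insert_Diff_if)
  finally show ?thesis .
qed

text \<open>Gluing shortest s-v and t-v paths gives an s-t walk, which has cost at least 1;
  the vertex v is counted twice.\<close>
lemma wdist_pair:
  assumes s: "s \<in> T" and t: "t \<in> T" and st: "s \<noteq> t" and v: "v \<in> fst G - T"
  shows "1 \<le> wdist s v + wdist t v - d v"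
proof (cases "paths_between G s v = {} \<or> paths_between G t v = {}")
  case True
  then have "wdist s v = d v + 1 \<or> wdist t v = d v + 1" by (auto simp: wdist_def)
  then show ?thesis using wdist_nonneg[OF v, of s] wdist_nonneg[OF v, of t] by linarith
next
  case False
  then obtain P1 P2 where "Defs.simple_path G P1" "hd P1 = s" "last P1 = v"
    and "Defs.simple_path G P2" "hd P2 = t" "last P2 = v" by (auto simp: paths_between_def)
  then obtain Q1 Q2 where Q1: "Defs.simple_path G Q1" "hd Q1 = s" "last Q1 = v" "path_cost T d Q1 = wdist s v"
    and Q2: "Defs.simple_path G Q2" "hd Q2 = t" "last Q2 = v" "path_cost T d Q2 = wdist t v"
    using wdist_attained[of P1 s v] wdist_attained[of P2 t v] by (auto simp: simple_path_iff)
  have w1: "walk G Q1" and w2: "walk G Q2" and ne: "Q1 \<noteq> []" "Q2 \<noteq> []"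
    using Q1 Q2 by (auto simp: simple_path_iff Defs.simple_path_def)
  have W: "walk G (Q1 @ rev Q2)"
    using w1 walk_rev[OF w2] Q1(3) Q2(3) ne(2) by (intro walk_append) (auto simp: hd_rev)
  obtain P where P: "P \<in> term_paths G T" "set P \<subseteq> set (Q1 @ rev Q2)"
    using walk_contains_term_path[OF W, of T] s t st Q1(2) Q2(2) ne by (auto simp: last_rev)
  have v12: "v \<in> (set Q1 - T) \<inter> (set Q2 - T)" using Q1(3) Q2(3) ne v last_in_set by fastforce
  have fin12: "finite ((set Q1 - T) \<inter> (set Q2 - T))" by simp
  have "1 \<le> path_cost T d P" using feas P(1) by (simp add: lp_feasible_def path_cost_def)
  also have "\<dots> \<le> sum d ((set Q1 - T) \<union> (set Q2 - T))"
    unfolding path_cost_def by (rule sum_mono2) (use P(2) walk_set[OF W] d_nonneg in auto)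
  also have "\<dots> = path_cost T d Q1 + path_cost T d Q2 - sum d ((set Q1 - T) \<inter> (set Q2 - T))"
    using sum.union_inter[of "set Q1 - T" "set Q2 - T" d] unfolding path_cost_def by simp
  also have "\<dots> \<le> path_cost T d Q1 + path_cost T d Q2 - d v"
    using member_le_sum[OF v12, of d] fin12 walk_set[OF w1] d_nonneg by force
  finally show ?thesis using Q1(4) Q2(4) by simp
qed

end

context lp_rounding
begin

text \<open>v lies on the boundary of the ball of radius \<theta> around s: the ball is entered
  while passing through v.\<close>
definition on_boundary :: "'a \<Rightarrow> 'a \<Rightarrow> real \<Rightarrow> bool" where
  "on_boundary s v \<theta> \<longleftrightarrow> wdist s v - d v \<le> \<theta> \<and> \<theta> < wdist s v"

lemma interior_vertex:
  assumes "Q \<in> term_paths G T" "interior_nonterminal T Q" "0 < i" "i < length Q - 1"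
  shows "Q ! i \<in> set Q" "Q ! i \<in> fst G - T"
  using assms term_path_set[OF assms(1)] by (auto simp: interior_nonterminal_def)

text \<open>If a terminal path with non-terminal interior never crosses the boundary of the
  \<theta>-ball around its start, its whole interior lies inside that ball: walking along the
  path, the distance grows by at most the weight of the newly reached vertex.\<close>
lemma interior_inside_ball:
  assumes Q: "Q \<in> term_paths G T" "interior_nonterminal T Q" and \<theta>: "0 \<le> \<theta>"
    and off: "\<forall>i. 0 < i \<longrightarrow> i < length Q - 1 \<longrightarrow> \<not> on_boundary (hd Q) (Q ! i) \<theta>"
  shows "Suc j < length Q - 1 \<Longrightarrow> wdist (hd Q) (Q ! Suc j) \<le> \<theta>"
proof -
  have QW: "walk G Q" using Q(1) by (simp add: term_paths_walk)
  have hd: "hd Q \<in> T" "hd Q \<in> fst G"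
    using Q(1) term_path_set[OF Q(1)] by (auto simp: term_paths_def Defs.simple_path_def)
  have inner: "0 < i \<Longrightarrow> i < length Q - 1 \<Longrightarrow> Q ! i \<in> fst G - T" for i
    using interior_vertex(2)[OF Q] .
  show "Suc j < length Q - 1 \<Longrightarrow> wdist (hd Q) (Q ! Suc j) \<le> \<theta>"
  proof (induction j)
    case 0
    have "wdist (hd Q) (Q ! 1) \<le> d (Q ! 1)"
      using term_path_ends(2)[OF no_adj Q(1)] hd inner[of 1] 0
      by (intro wdist_adjacent) auto
    then show ?case using off 0 \<theta> by (auto simp: on_boundary_def)
  next
    case (Suc j)
    let ?W = "take (Suc (Suc j)) Q"
    have lenW: "length ?W = Suc (Suc j)" using Suc.prems by simp
    then have "last ?W = ?W ! (length ?W - 1)" by (intro last_conv_nth) auto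
    then have "last ?W = Q ! Suc j" using lenW by simp
    moreover have "walk G ?W" "hd ?W = hd Q" using walk_take[OF QW] by simp_all
    moreover have "adj G (Q ! Suc j) (Q ! Suc (Suc j))" using term_path_adj[OF Q(1)] Suc.prems by simp
    ultimately have "wdist (hd Q) (Q ! Suc (Suc j)) \<le> wdist (hd Q) (Q ! Suc j) + d (Q ! Suc (Suc j))"
      using inner[of "Suc (Suc j)"] Suc.prems by (intro wdist_step) auto
    then show ?case using Suc off by (auto simp: on_boundary_def)
  qed
qed

text \<open>Otherwise the vertex v next to the other end t lies in
  the ball, while wdist t v \<le> d v, contradicting wdist_pair.\<close>
lemma boundary_vertex_exists:
  assumes Q: "Q \<in> term_paths G T" "interior_nonterminal T Q" and \<theta>: "0 \<le> \<theta>" "\<theta> < 1"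
  shows "\<exists>i. 0 < i \<and> i < length Q - 1 \<and> on_boundary (hd Q) (Q ! i) \<theta>"
proof (rule ccontr)
  assume "\<not> ?thesis"
  then have off: "\<forall>i. 0 < i \<longrightarrow> i < length Q - 1 \<longrightarrow> \<not> on_boundary (hd Q) (Q ! i) \<theta>" by blast
  define n where "n = length Q"
  have n3: "3 \<le> n" using term_path_ends(1)[OF no_adj Q(1)] by (simp add: n_def)
  have ends: "hd Q \<in> T" "last Q \<in> T" "hd Q \<noteq> last Q" "last Q \<in> fst G"
    using Q(1) term_path_set[OF Q(1)] by (auto simp: term_paths_def Defs.simple_path_def)
  define v where "v = Q ! (n - 2)"
  have v: "v \<in> fst G - T" using interior_vertex(2)[OF Q, of "n - 2"] n3 by (simp add: v_def n_def)
  have "Suc (n - 3) = n - 2" "Suc (n - 3) < n - 1" using n3 by arith+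
  then have "wdist (hd Q) v \<le> \<theta>"
    using interior_inside_ball[OF Q \<theta>(1) off, of "n - 3"] by (simp add: v_def n_def)
  moreover have "wdist (last Q) v \<le> d v"
    using term_path_ends(3)[OF no_adj Q(1)] ends v
    by (intro wdist_adjacent) (auto simp: adj_sym v_def n_def)
  moreover have "1 \<le> wdist (hd Q) v + wdist (last Q) v - d v" using wdist_pair ends v by blast
  ultimately show False using \<theta>(2) by linarith
qed

definition rounded :: "real \<Rightarrow> 'a \<Rightarrow> real" where
  "rounded \<theta> v = (if v \<in> fst G - T then
      (if \<exists>s\<in>T. on_boundary s v \<theta> then 1/2 else 0) +
      (if \<exists>s\<in>T. \<exists>t\<in>T. s \<noteq> t \<and> on_boundary s v \<theta> \<and> on_boundary t v \<theta> then 1/2 else 0)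
    else 0)"

lemma rounded_values: "rounded \<theta> v \<in> {0, 1/2, 1}"
  by (simp add: rounded_def)

lemma rounded_nonneg: "0 \<le> rounded \<theta> v"
  by (simp add: rounded_def)

text \<open>Rounding at any threshold in [0, 1) gives a feasible solution: every terminal path
  contains one with non-terminal interior, which crosses the boundaries of the balls around
  both of its ends.\<close>
lemma rounded_feasible:
  assumes \<theta>: "0 \<le> \<theta>" "\<theta> < 1"
  shows "lp_feasible G T (rounded \<theta>)"
  unfolding lp_feasible_def
proof (intro conjI ballI)
  fix P assume P: "P \<in> term_paths G T"
  obtain Q where Q: "Q \<in> term_paths G T" "set Q \<subseteq> set P" "interior_nonterminal T Q"
    using term_path_shortcut[OF P] by blast
  have ends: "hd Q \<in> T" "last Q \<in> T" "hd Q \<noteq> last Q" using Q(1) by (auto simp: term_paths_def)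
  note R = term_path_rev[OF Q(1,3)]
  obtain i1 where i1: "0 < i1" "i1 < length Q - 1" "on_boundary (hd Q) (Q ! i1) \<theta>"
    using boundary_vertex_exists[OF Q(1,3) \<theta>] by blast
  obtain i2 where i2: "0 < i2" "i2 < length (rev Q) - 1" "on_boundary (last Q) (rev Q ! i2) \<theta>"
    using boundary_vertex_exists[OF R \<theta>] by (auto simp: hd_rev)
  define u1 where "u1 = Q ! i1"
  define u2 where "u2 = rev Q ! i2"
  have u1: "u1 \<in> set P - T" "u1 \<in> fst G - T" using interior_vertex[OF Q(1,3) i1(1,2)] Q(2) by (auto simp: u1_def)
  have u2: "u2 \<in> set P - T" "u2 \<in> fst G - T" using interior_vertex[OF R i2(1,2)] Q(2) by (auto simp: u2_def)
  have half1: "1/2 \<le> rounded \<theta> u1" using u1(2) i1(3) ends(1) by (auto simp: rounded_def u1_def)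
  have half2: "1/2 \<le> rounded \<theta> u2" using u2(2) i2(3) ends(2) by (auto simp: rounded_def u2_def)
  show "1 \<le> (\<Sum>v\<in>set P - T. rounded \<theta> v)"
  proof (cases "u1 = u2")
    case True
    then have "rounded \<theta> u1 = 1" using u1(2) i1(3) i2(3) ends by (auto simp: rounded_def u1_def u2_def)
    then show ?thesis using member_le_sum[OF u1(1), of "rounded \<theta>"] rounded_nonneg by simp
  next
    case False
    have "rounded \<theta> u1 + rounded \<theta> u2 = (\<Sum>v\<in>{u1, u2}. rounded \<theta> v)" using False by simp
    also have "\<dots> \<le> (\<Sum>v\<in>set P - T. rounded \<theta> v)"
      using u1(1) u2(1) rounded_nonneg by (intro sum_mono2) auto
    finally show ?thesis using half1 half2 by simp
  qed
qed (rule rounded_nonneg)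

end

context lp_rounding
begin

lemma rounded_as_indicators:
  assumes "v \<in> fst G - T"
  shows "indicator {0..<1/2} \<theta> * rounded \<theta> v =
    1/2 * indicator (covered_once (\<lambda>s. wdist s v - d v) (d v) T \<inter> {0..<1/2}) \<theta> +
    1/2 * indicator (covered_twice (\<lambda>s. wdist s v - d v) (d v) T \<inter> {0..<1/2}) \<theta>"
proof -
  have once: "\<theta> \<in> covered_once (\<lambda>s. wdist s v - d v) (d v) T \<longleftrightarrow> (\<exists>s\<in>T. on_boundary s v \<theta>)"
    by (simp add: covered_once_def on_boundary_def)
  have twice: "\<theta> \<in> covered_twice (\<lambda>s. wdist s v - d v) (d v) T \<longleftrightarrow>
      (\<exists>s\<in>T. \<exists>t\<in>T. s \<noteq> t \<and> on_boundary s v \<theta> \<and> on_boundary t v \<theta>)"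
    by (simp add: covered_twice_def on_boundary_def conj_ac)
  show ?thesis unfolding rounded_def indicator_def using assms by (simp add: once twice)
qed

lemma rounded_cost_integral:
  defines "N \<equiv> fst G - T"
  shows "integrable lborel (\<lambda>\<theta>. indicator {0..<1/2} \<theta> * sum (rounded \<theta>) N)"
    "integral\<^sup>L lborel (\<lambda>\<theta>. indicator {0..<1/2} \<theta> * sum (rounded \<theta>) N)
       \<le> sum d N * measure lborel {0..<1/2::real}"
proof -
  define B1 where "B1 v = covered_once (\<lambda>s. wdist s v - d v) (d v) T \<inter> {0..<1/2}" for v
  define B2 where "B2 v = covered_twice (\<lambda>s. wdist s v - d v) (d v) T \<inter> {0..<1/2}" for v
  have int1: "integrable lborel (indicator (B1 v) :: real \<Rightarrow> real)" for v
    unfolding B1_def using covered_once_sets[OF fin_T] by (intro integrable_indicator_half) auto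
  have int2: "integrable lborel (indicator (B2 v) :: real \<Rightarrow> real)" for v
    unfolding B2_def using covered_twice_sets[OF fin_T] by (intro integrable_indicator_half) auto
  have eq: "indicator {0..<1/2} \<theta> * sum (rounded \<theta>) N =
      (\<Sum>v\<in>N. 1/2 * indicator (B1 v) \<theta> + 1/2 * indicator (B2 v) \<theta>)" for \<theta> :: real
    unfolding sum_distrib_left B1_def B2_def N_def by (intro sum.cong refl rounded_as_indicators)
  show "integrable lborel (\<lambda>\<theta>. indicator {0..<1/2} \<theta> * sum (rounded \<theta>) N)"
    unfolding eq using int1 int2 by simp
  have "integral\<^sup>L lborel (\<lambda>\<theta>. indicator {0..<1/2} \<theta> * sum (rounded \<theta>) N)
      = (\<Sum>v\<in>N. 1/2 * measure lborel (B1 v) + 1/2 * measure lborel (B2 v))"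
    unfolding eq using int1 int2 by (simp add: Bochner_Integration.integral_sum)
  also have "\<dots> \<le> (\<Sum>v\<in>N. 1/2 * d v)"
  proof (rule sum_mono)
    fix v assume v: "v \<in> N"
    have "measure lborel (B1 v) + measure lborel (B2 v) \<le> d v"
      unfolding B1_def B2_def
      using covered_measure_bound[OF fin_T d_nonneg] wdist_pair v by (auto simp: N_def)
    then show "1/2 * measure lborel (B1 v) + 1/2 * measure lborel (B2 v) \<le> 1/2 * d v" by simp
  qed
  also have "\<dots> = sum d N * measure lborel {0..<1/2::real}"
    by (simp add: sum_divide_distrib[symmetric])
  finally show "integral\<^sup>L lborel (\<lambda>\<theta>. indicator {0..<1/2} \<theta> * sum (rounded \<theta>) N)
       \<le> sum d N * measure lborel {0..<1/2::real}" .
qed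

lemma exists_good_threshold:
  "\<exists>\<theta>. 0 \<le> \<theta> \<and> \<theta> < 1/2 \<and> sum (rounded \<theta>) (fst G - T) \<le> sum d (fst G - T)"
proof -
  let ?N = "fst G - T"
  have "(\<lambda>\<theta>. sum (rounded \<theta>) ?N) ` {0..<1/2} \<subseteq> (\<lambda>k. real k / 2) ` {..2 * card ?N}"
  proof (rule image_subsetI)
    fix \<theta> :: real
    obtain k where "k \<le> 2 * card ?N" "sum (rounded \<theta>) ?N = real k / 2"
      using sum_half_integral[of ?N "rounded \<theta>"] rounded_values fin_V by blast
    then show "sum (rounded \<theta>) ?N \<in> (\<lambda>k. real k / 2) ` {..2 * card ?N}" by auto
  qed
  then have fin: "finite ((\<lambda>\<theta>. sum (rounded \<theta>) ?N) ` {0..<1/2})" by (rule finite_subset) simp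
  have J: "{0..<1/2::real} \<in> fmeasurable lborel" "0 < measure lborel {0..<1/2::real}"
    using fmeasurable_half by simp_all
  have "\<exists>\<theta>\<in>{0..<1/2}. sum (rounded \<theta>) ?N \<le> sum d ?N"
    by (rule exists_le_average[OF J fin rounded_cost_integral])
  then show ?thesis by auto
qed

end

definition half_integral :: "'a graph \<Rightarrow> 'a set \<Rightarrow> ('a \<Rightarrow> real) \<Rightarrow> bool" where
  "half_integral G T x \<longleftrightarrow> lp_feasible G T x \<and> (\<forall>v. x v \<in> {0, 1/2, 1})"

lemma LP_le_cost: "lp_feasible G T d \<Longrightarrow> LP G T \<le> ereal (sum d (fst G - T))"
  unfolding LP_def by (rule INF_lower) simp

lemma LP_zero_le_cost: "lp_feasible G T d \<Longrightarrow> d w = 0 \<Longrightarrow> LP_zero G T w \<le> ereal (sum d (fst G - T))"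
  unfolding LP_zero_def by (rule INF_lower) simp

lemma half_integral_cost:
  "finite (fst G) \<Longrightarrow> half_integral G T x \<Longrightarrow> \<exists>k::nat. sum x (fst G - T) = real k / 2"
  using sum_half_integral[of "fst G - T" x] by (auto simp: half_integral_def)

lemma half_integer_gap:
  fixes a b :: real
  assumes "a = real k / 2" "b = real l / 2" "a < b"
  shows "a + 1/2 \<le> b"
proof -
  have "k < l" using assms by simp
  then have "real k + 1 \<le> real l" by linarith
  then show ?thesis using assms(1,2) by simp
qed

text \<open>Without adjacent terminals, every terminal path has a non-terminal vertex, so
  putting weight 1 on all non-terminals is feasible.\<close>
lemma all_ones_feasible:
  assumes no_adj: "\<forall>u\<in>T. \<forall>v\<in>T. \<not> adj G u v"
  shows "lp_feasible G T (\<lambda>v. if v \<in> fst G - T then 1 else 0)"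
  unfolding lp_feasible_def
proof (intro conjI ballI)
  fix P assume P: "P \<in> term_paths G T"
  have "3 \<le> length P" "P ! 1 \<notin> T" using term_path_ends[OF no_adj P] by simp_all
  then have u: "P ! 1 \<in> set P - T" by simp
  then have "P ! 1 \<in> fst G - T" using term_path_set[OF P] by blast
  then show "1 \<le> (\<Sum>v\<in>set P - T. if v \<in> fst G - T then 1 else 0 :: real)"
    using member_le_sum[OF u, of "\<lambda>v. if v \<in> fst G - T then 1 else 0 :: real"] by simp
qed simp

text \<open>Among the finitely many half-integral costs take the least one; threshold
  rounding turns every feasible solution into a half-integral one of no larger cost.\<close>
theorem LP_half_integral:
  assumes fin_V: "finite (fst G)" and fin_T: "finite T" and no_adj: "\<forall>u\<in>T. \<forall>v\<in>T. \<not> adj G u v"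
  shows "\<exists>x. half_integral G T x \<and> LP G T = ereal (sum x (fst G - T))"
proof -
  define N where "N = fst G - T"
  define C where "C = (\<lambda>x. sum x N) ` {x. half_integral G T x}"
  have "C \<subseteq> (\<lambda>k. real k / 2) ` {..2 * card N}"
  proof
    fix c assume "c \<in> C"
    then obtain x where "half_integral G T x" "c = sum x N" by (auto simp: C_def)
    then show "c \<in> (\<lambda>k. real k / 2) ` {..2 * card N}"
      using sum_half_integral[of N x] fin_V by (auto simp: N_def half_integral_def)
  qed
  then have "finite C" by (rule finite_subset) simp
  moreover have "half_integral G T (\<lambda>v. if v \<in> fst G - T then 1 else 0)"
    using all_ones_feasible[OF no_adj] by (simp add: half_integral_def)
  then have "C \<noteq> {}" by (auto simp: C_def)
  ultimately have "Min C \<in> C" by (rule Min_in)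
  then obtain x where x: "half_integral G T x" "sum x N = Min C" by (auto simp: C_def)
  have x_min: "sum x N \<le> sum y N" if "half_integral G T y" for y
    unfolding x(2) using \<open>finite C\<close> that by (auto simp: C_def)
  have "sum x N \<le> sum d N" if d: "lp_feasible G T d" for d
  proof -
    interpret lp_rounding G T d using fin_V fin_T no_adj d by unfold_locales
    obtain \<theta> where \<theta>: "0 \<le> \<theta>" "\<theta> < 1/2" "sum (rounded \<theta>) N \<le> sum d N"
      using exists_good_threshold by (auto simp: N_def)
    have "half_integral G T (rounded \<theta>)"
      using rounded_values rounded_feasible \<theta> by (simp add: half_integral_def)
    then show ?thesis using x_min[of "rounded \<theta>"] \<theta>(3) by linarith
  qed
  then have "ereal (sum x N) \<le> LP G T" unfolding LP_def N_def by (intro INF_greatest) simp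
  moreover have "LP G T \<le> ereal (sum x N)"
    using x(1) LP_le_cost[of G T x] by (simp add: N_def half_integral_def)
  ultimately show ?thesis using x(1) by (auto simp: N_def)
qed

lemma lift_from_delete:
  assumes "lp_feasible (del_vertex G w) T x" "w \<notin> T"
  shows "lp_feasible G T (x(w := 1))"
  unfolding lp_feasible_def
proof (intro conjI ballI)
  fix v assume "v \<in> fst G - T"
  then show "0 \<le> (x(w := 1)) v" using assms(1) by (auto simp: lp_feasible_def fst_del)
next
  fix P assume P: "P \<in> term_paths G T"
  have nonneg: "\<forall>v\<in>set P - T. 0 \<le> (x(w := 1)) v"
    using assms(1) term_path_set[OF P] by (auto simp: lp_feasible_def fst_del)
  show "1 \<le> (\<Sum>v\<in>set P - T. (x(w := 1)) v)"
  proof (cases "w \<in> set P")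
    case True
    then have "w \<in> set P - T" using assms(2) by simp
    then have "(x(w := 1)) w \<le> (\<Sum>v\<in>set P - T. (x(w := 1)) v)"
    proof (rule member_le_sum)
      fix v assume "v \<in> set P - T - {w}"
      then show "0 \<le> (x(w := 1)) v" using nonneg by blast
    qed simp
    then show ?thesis by simp
  next
    case False
    then have "1 \<le> (\<Sum>v\<in>set P - T. x v)"
      using P assms(1) by (simp add: term_paths_del lp_feasible_def)
    also have "\<dots> = (\<Sum>v\<in>set P - T. (x(w := 1)) v)" using False by (intro sum.cong) auto
    finally show ?thesis .
  qed
qed

lemma lift_from_contract:
  assumes x: "lp_feasible (contract G t w) T x" and t: "t \<in> T" "t \<in> fst G" and w: "w \<notin> T"
  shows "lp_feasible G T (x(w := 0))"
  unfolding lp_feasible_def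
proof (intro conjI ballI)
  fix v assume "v \<in> fst G - T"
  then show "0 \<le> (x(w := 0)) v" using x by (auto simp: lp_feasible_def contract_def)
next
  fix P assume P: "P \<in> term_paths G T"
  obtain Q where Q: "Q \<in> term_paths (contract G t w) T" "set Q \<subseteq> set P - {w} \<union> {t}"
    using term_path_to_contract[OF P t w] by blast
  have "1 \<le> (\<Sum>v\<in>set Q - T. x v)" using x Q(1) by (simp add: lp_feasible_def)
  also have "\<dots> = (\<Sum>v\<in>set Q - T. (x(w := 0)) v)"
    using Q(2) t(1) w by (intro sum.cong) auto
  also have "\<dots> \<le> (\<Sum>v\<in>set P - T. (x(w := 0)) v)"
    using Q(2) t(1) x term_path_set[OF P] by (intro sum_mono2) (auto simp: lp_feasible_def contract_def)
  finally show "1 \<le> (\<Sum>v\<in>set P - T. (x(w := 0)) v)" .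
qed

definition terminal_neighbours :: "'a graph \<Rightarrow> 'a set \<Rightarrow> 'a set" where
  "terminal_neighbours G T = {v \<in> fst G - T. \<exists>s\<in>T. adj G v s}"

text \<open>Under (R1) and (R2), weight 1/2 on all terminal neighbours is feasible: the second and
  the second-to-last vertices of a terminal path are distinct terminal neighbours.\<close>
lemma terminal_neighbours_half_feasible:
  assumes no_adj: "\<forall>u\<in>T. \<forall>v\<in>T. \<not> adj G u v"
    and unique: "\<forall>v\<in>fst G - T. \<forall>u\<in>T. \<forall>u'\<in>T. adj G v u \<and> adj G v u' \<longrightarrow> u = u'"
  shows "lp_feasible G T (\<lambda>v. if v \<in> terminal_neighbours G T then 1/2 else 0)"
  unfolding lp_feasible_def
proof (intro conjI ballI)
  let ?h = "\<lambda>v. if v \<in> terminal_neighbours G T then 1/2 else 0 :: real"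
  fix P assume P: "P \<in> term_paths G T"
  note ends = term_path_ends[OF no_adj P]
  have PT: "hd P \<in> T" "last P \<in> T" "hd P \<noteq> last P" using P by (auto simp: term_paths_def)
  define u1 where "u1 = P ! 1"
  define u2 where "u2 = P ! (length P - 2)"
  have u: "u1 \<in> set P - T" "u2 \<in> set P - T" using ends by (auto simp: u1_def u2_def)
  have a: "adj G u1 (hd P)" "adj G u2 (last P)" using ends by (auto simp: u1_def u2_def adj_sym)
  have N: "u1 \<in> terminal_neighbours G T" "u2 \<in> terminal_neighbours G T"
    using u a PT term_path_set[OF P] by (auto simp: terminal_neighbours_def)
  have "u1 \<noteq> u2" using unique u a PT term_path_set[OF P] by blast
  then have "(\<Sum>v\<in>{u1, u2}. ?h v) = 1" using N by simp
  moreover have "(\<Sum>v\<in>{u1, u2}. ?h v) \<le> (\<Sum>v\<in>set P - T. ?h v)"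
    using u by (intro sum_mono2) auto
  ultimately show "1 \<le> (\<Sum>v\<in>set P - T. ?h v)" by simp
qed simp

lemma LP_le_terminal_neighbours:
  assumes fin: "finite (fst G)" and no_adj: "\<forall>u\<in>T. \<forall>v\<in>T. \<not> adj G u v"
    and unique: "\<forall>v\<in>fst G - T. \<forall>u\<in>T. \<forall>u'\<in>T. adj G v u \<and> adj G v u' \<longrightarrow> u = u'"
  shows "LP G T \<le> ereal (real (card (terminal_neighbours G T)) / 2)"
proof -
  let ?NT = "terminal_neighbours G T"
  have "?NT \<subseteq> fst G - T" by (auto simp: terminal_neighbours_def)
  have "LP G T \<le> ereal (\<Sum>v\<in>fst G - T. if v \<in> ?NT then 1/2 else 0)"
    by (rule LP_le_cost[OF terminal_neighbours_half_feasible[OF no_adj unique]])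
  also have "(\<Sum>v\<in>fst G - T. if v \<in> ?NT then 1/2 else 0 :: real) = (\<Sum>v\<in>?NT. 1/2)"
    using fin \<open>?NT \<subseteq> fst G - T\<close> by (simp add: sum.If_cases Int_absorb1)
  finally show ?thesis by simp
qed

lemma half_integral_zero_entry:
  fixes x :: "'b \<Rightarrow> real"
  assumes "finite S" "\<forall>u\<in>S. x u \<in> {0, 1/2, 1}" "sum x S < real (card S) / 2"
  shows "\<exists>u\<in>S. x u = 0"
proof (rule ccontr)
  assume "\<not> ?thesis"
  then have "\<forall>u\<in>S. 1/2 \<le> x u" using assms(2) by auto
  then have "real (card S) * (1/2) \<le> sum x S" by (intro sum_bounded_below) auto
  then show False using assms(3) by simp
qed

lemma sum_fun_upd:
  fixes x :: "'b \<Rightarrow> real"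
  assumes "finite N" "w \<in> N"
  shows "sum (x(w := a)) N = a + sum x (N - {w})"
proof -
  have "sum (x(w := a)) N = a + sum (x(w := a)) (N - {w})" using assms by (simp add: sum.remove)
  also have "sum (x(w := a)) (N - {w}) = sum x (N - {w})" by (intro sum.cong) auto
  finally show ?thesis .
qed

locale reduced_instance =
  fixes G :: "'a graph" and T :: "'a set"
  assumes inst: "is_mwc_instance G T"
    and no_adj: "\<forall>u\<in>T. \<forall>v\<in>T. \<not> adj G u v"
    and unique: "\<forall>v\<in>fst G - T. \<forall>u\<in>T. \<forall>u'\<in>T. adj G v u \<and> adj G v u' \<longrightarrow> u = u'"
    and strict: "\<forall>s\<in>T. \<forall>x\<in>fst G - T. adj G s x \<longrightarrow> LP_zero G T x > LP G T"
begin

lemma fin_V: "finite (fst G)" and T_sub: "T \<subseteq> fst G"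
  using inst by (simp_all add: is_mwc_instance_def simple_graph_def)

lemma fin_T: "finite T"
  using finite_subset[OF T_sub fin_V] .

lemma branch_optima:
  assumes t: "t \<in> T" and w: "w \<in> fst G - T" and tw: "adj G t w"
  shows "\<exists>x. half_integral (del_vertex G w) T x \<and>
           LP (del_vertex G w) T = ereal (sum x (fst G - T - {w}))"
    "\<exists>x. half_integral (contract G t w) T x \<and>
           LP (contract G t w) T = ereal (sum x (fst G - T - {w}))"
proof -
  have "fst (del_vertex G w) - T = fst G - T - {w}" "fst (contract G t w) - T = fst G - T - {w}"
    by (auto simp: fst_del contract_def)
  moreover have "\<forall>u\<in>T. \<forall>v\<in>T. \<not> adj (del_vertex G w) u v" using no_adj by (simp add: adj_del)
  moreover have "\<forall>u\<in>T. \<forall>v\<in>T. \<not> adj (contract G t w) u v"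
    using contract_no_adjacent_terminals[OF no_adj unique t w tw] .
  moreover have "finite (fst (del_vertex G w))" "finite (fst (contract G t w))"
    using fin_V by (simp_all add: fst_del contract_def)
  ultimately show
    "\<exists>x. half_integral (del_vertex G w) T x \<and> LP (del_vertex G w) T = ereal (sum x (fst G - T - {w}))"
    "\<exists>x. half_integral (contract G t w) T x \<and> LP (contract G t w) T = ereal (sum x (fst G - T - {w}))"
    using LP_half_integral[OF _ fin_T, of "del_vertex G w"] LP_half_integral[OF _ fin_T, of "contract G t w"]
    by simp_all
qed

text \<open>Contraction raises the LP value by at least 1/2: an optimum of G/tw lifts to a
  solution of G with d_w = 0, which by (R3) costs more than LP(I), and both values are
  half-integers.\<close>
lemma LP_contract_lower:
  assumes t: "t \<in> T" and w: "w \<in> fst G - T" and tw: "adj G t w"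
  shows "LP G T + ereal (1/2) \<le> LP (contract G t w) T"
proof -
  obtain x0 where x0: "half_integral G T x0" "LP G T = ereal (sum x0 (fst G - T))"
    using LP_half_integral[OF fin_V fin_T no_adj] by blast
  obtain x2 where x2: "half_integral (contract G t w) T x2"
      "LP (contract G t w) T = ereal (sum x2 (fst G - T - {w}))"
    using branch_optima(2)[OF t w tw] by blast
  have "t \<in> fst G" using t T_sub by blast
  then have "lp_feasible G T (x2(w := 0))"
    using x2(1) t w by (intro lift_from_contract) (simp_all add: half_integral_def)
  then have "LP_zero G T w \<le> ereal (sum (x2(w := 0)) (fst G - T))" by (rule LP_zero_le_cost) simp
  also have "sum (x2(w := 0)) (fst G - T) = sum x2 (fst G - T - {w})"
    using sum_fun_upd[of "fst G - T" w x2 0] fin_V w by simp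
  finally have zero_le: "LP_zero G T w \<le> ereal (sum x2 (fst G - T - {w}))" .
  have "LP G T < LP_zero G T w" using strict t w tw by blast
  then have "ereal (sum x0 (fst G - T)) < LP_zero G T w" by (simp only: x0(2))
  also note zero_le
  finally have less: "sum x0 (fst G - T) < sum x2 (fst G - T - {w})" by simp
  obtain k0 where k0: "sum x0 (fst G - T) = real k0 / 2"
    using half_integral_cost[OF fin_V x0(1)] by blast
  have "fst (contract G t w) - T = fst G - T - {w}" by (auto simp: contract_def)
  moreover have "finite (fst (contract G t w))" using fin_V by (simp add: contract_def)
  ultimately obtain k2 where k2: "sum x2 (fst G - T - {w}) = real k2 / 2"
    using half_integral_cost[OF _ x2(1)] by auto
  have "sum x0 (fst G - T) + 1/2 \<le> sum x2 (fst G - T - {w})"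
    by (rule half_integer_gap[OF k0 k2 less])
  then show ?thesis using x0(2) x2(2) by simp
qed

text \<open>If deleting the terminal neighbour w saves a full unit, then a half-integral optimum of
  G - w vanishes at some other terminal neighbour: LP(I) is at most half the number of
  terminal neighbours, so the remaining ones cannot all carry weight 1/2.\<close>
lemma cheap_deletion_zero_neighbour:
  assumes w: "w \<in> terminal_neighbours G T" and x1: "half_integral (del_vertex G w) T x1"
    and cheap: "ereal (sum x1 (fst G - T - {w}) + 1) \<le> LP G T"
  shows "\<exists>u\<in>terminal_neighbours G T - {w}. x1 u = 0"
proof (rule half_integral_zero_entry)
  let ?NT = "terminal_neighbours G T"
  have NT: "?NT \<subseteq> fst G - T" by (auto simp: terminal_neighbours_def)
  then have fin_NT: "finite ?NT" using fin_V finite_subset by blast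
  show "finite (?NT - {w})" using fin_NT by simp
  show vals: "\<forall>u\<in>?NT - {w}. x1 u \<in> {0, 1/2, 1}" using x1 by (simp add: half_integral_def)
  have nonneg: "0 \<le> x1 v" for v
  proof -
    have "x1 v \<in> {0, 1/2, 1}" using x1 by (simp add: half_integral_def)
    then show ?thesis by auto
  qed
  have "sum x1 (?NT - {w}) \<le> sum x1 (fst G - T - {w})"
    using NT fin_V nonneg by (intro sum_mono2) auto
  also have "ereal (sum x1 (fst G - T - {w}) + 1) \<le> ereal (real (card ?NT) / 2)"
    using cheap LP_le_terminal_neighbours[OF fin_V no_adj unique] by (rule order_trans)
  then have "sum x1 (fst G - T - {w}) \<le> real (card ?NT) / 2 - 1" by simp
  also have "\<dots> < real (card (?NT - {w})) / 2"
    using w fin_NT by (simp add: card_Diff_singleton of_nat_diff card_gt_0_iff)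
  finally show "sum x1 (?NT - {w}) < real (card (?NT - {w})) / 2" .
qed

text \<open>Deletion lowers the LP value by at most 1/2. Otherwise the lifted solution
  x1(w := 1) is optimal for G and vanishes at some terminal neighbour u, so already the LP
  with d_u = 0 attains LP(I), contradicting (R3).\<close>
lemma LP_delete_lower:
  assumes t: "t \<in> T" and w: "w \<in> fst G - T" and tw: "adj G t w"
  shows "LP G T - ereal (1/2) \<le> LP (del_vertex G w) T"
proof -
  obtain x0 where x0: "half_integral G T x0" "LP G T = ereal (sum x0 (fst G - T))"
    using LP_half_integral[OF fin_V fin_T no_adj] by blast
  obtain x1 where x1: "half_integral (del_vertex G w) T x1"
      "LP (del_vertex G w) T = ereal (sum x1 (fst G - T - {w}))"
    using branch_optima(1)[OF t w tw] by blast
  have "sum x0 (fst G - T) \<le> sum x1 (fst G - T - {w}) + 1/2"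
  proof (rule ccontr)
    assume "\<not> ?thesis"
    obtain k0 where k0: "sum x0 (fst G - T) = real k0 / 2"
      using half_integral_cost[OF fin_V x0(1)] by blast
    have "fst (del_vertex G w) - T = fst G - T - {w}" "finite (fst (del_vertex G w))"
      using fin_V by (auto simp: fst_del)
    then obtain k1 where "sum x1 (fst G - T - {w}) = real k1 / 2"
      using half_integral_cost[OF _ x1(1)] by auto
    then have "sum x1 (fst G - T - {w}) + 1/2 = real (Suc k1) / 2" by simp
    from half_integer_gap[OF this k0] \<open>\<not> ?thesis\<close>
    have cheap: "sum x1 (fst G - T - {w}) + 1 \<le> sum x0 (fst G - T)" by simp
    have "w \<in> terminal_neighbours G T"
      using w t tw by (auto simp: terminal_neighbours_def adj_sym)
    then obtain u where u: "u \<in> terminal_neighbours G T" "u \<noteq> w" "x1 u = 0"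
      using cheap_deletion_zero_neighbour x1(1) cheap x0(2) by auto
    have "lp_feasible G T (x1(w := 1))"
      using x1(1) w by (intro lift_from_delete) (simp_all add: half_integral_def)
    then have "LP_zero G T u \<le> ereal (sum (x1(w := 1)) (fst G - T))"
      using u by (intro LP_zero_le_cost) simp_all
    also have "sum (x1(w := 1)) (fst G - T) = sum x1 (fst G - T - {w}) + 1"
      using sum_fun_upd[of "fst G - T" w x1 1] fin_V w by simp
    finally have "LP_zero G T u \<le> LP G T" using cheap x0(2) by (simp add: order_trans)
    moreover obtain s where "s \<in> T" "adj G s u" "u \<in> fst G - T"
      using u(1) by (auto simp: terminal_neighbours_def adj_sym)
    then have "LP G T < LP_zero G T u" using strict by blast
    ultimately show False by simp
  qed
  then show ?thesis using x0(2) x1(2) by (simp add: ereal_minus_le_iff)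
qed

end

theorem mainTheorem4:
  fixes G :: "'a graph" and T :: "'a set" and k :: int and t w :: 'a
  assumes inst: "is_mwc_instance G T"
    and R1: "\<forall>u\<in>T. \<forall>v\<in>T. \<not> adj G u v" "gap G T k \<ge> 0"
    and R2: "\<forall>v\<in>fst G - T. \<forall>u\<in>T. \<forall>u'\<in>T. adj G v u \<and> adj G v u' \<longrightarrow> u = u'"
    and R3: "\<forall>s\<in>T. \<forall>x\<in>fst G - T. adj G s x \<longrightarrow> LP_zero G T x > LP G T"
    and t: "t \<in> T" and w: "w \<in> fst G - T" and tw: "adj G t w"
  shows "LP (del_vertex G w) T \<ge> LP G T - ereal (1/2) \<and>
         LP (contract G t w) T \<ge> LP G T + ereal (1/2) \<and>
         gap (del_vertex G w) T (k - 1) \<le> gap G T k - ereal (1/2) \<and>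
         gap (contract G t w) T k \<le> gap G T k - ereal (1/2) \<and>
         (yes_instance G T k \<longleftrightarrow>
           (yes_instance (del_vertex G w) T (k - 1) \<or> yes_instance (contract G t w) T k))"
proof -
  interpret reduced_instance G T using inst R1(1) R2 R3 by unfold_locales
  have del: "LP G T - ereal (1/2) \<le> LP (del_vertex G w) T" by (rule LP_delete_lower[OF t w tw])
  have con: "LP G T + ereal (1/2) \<le> LP (contract G t w) T" by (rule LP_contract_lower[OF t w tw])
  \<comment> \<open>all three LP values are finite, so the gap bounds follow by real arithmetic\<close>
  obtain c0 where c0: "LP G T = ereal c0" using LP_half_integral[OF fin_V fin_T no_adj] by blast
  obtain c1 where c1: "LP (del_vertex G w) T = ereal c1" using branch_optima(1)[OF t w tw] by blast
  obtain c2 where c2: "LP (contract G t w) T = ereal c2" using branch_optima(2)[OF t w tw] by blast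
  have gaps: "gap (del_vertex G w) T (k - 1) \<le> gap G T k - ereal (1/2)"
    "gap (contract G t w) T k \<le> gap G T k - ereal (1/2)"
    using del con by (simp_all add: gap_def c0 c1 c2)
  have "t \<in> fst G" using t T_sub by blast
  then show ?thesis using del con gaps yes_instance_branching[OF fin_V t _ w tw] by simp
qed
end
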